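(* Assume $\operatorname{add}(\mathcal N)=\operatorname{cov}(\mathcal N)$. Then $\mathcal{NM}_{\operatorname{add}(\mathcal N)}$, $\mathcal{NF}_{\operatorname{add}(\mathcal N)}$ and $\mathcal{ND}_{\operatorname{add}(\mathcal N)}$ are positively $2^{\mathfrak c}$-coneable in $\left(\mathbb R^{[0,1]}\right)^{\operatorname{add}(\mathcal N)}$.
   Context: For a regular infinite cardinal $\kappa$ (ordinals $<\kappa$ with usual order), a $\kappa$-sequence $(x_\alpha)_{\alpha<\kappa}$ converges to $x$ if for every neighbourhood $U$ of $x$ there is $\alpha_0<\kappa$ with $x_\alpha\in U$ for all $\alpha_0<\alpha<\kappa$; $\left(\mathbb R^{[0,1]}\right)^{\kappa}$ is the real vector space of $\kappa$-sequences of functions $[0,1]\to\mathbb R$ with indexwise operations. $\lambda$ is Lebesgue measure, $\mathcal N$ the null subsets of $[0,1]$; $\operatorname{add}(\mathcal N)$ is the least cardinality of a family of null sets whose union is not null (a regular cardinal), $\operatorname{cov}(\mathcal N)$ the least cardinality of a family of null sets covering $[0,1]$. For bounded transfinite sequences of reals, $\liminf$ is the infimum of cluster points. $\mathcal{NM}_{\kappa}$: $\kappa$-sequences of Lebesgue measurable $f_\alpha:[0,1]\to\mathbb R$ with $0\le f_\alpha\le f_\beta$ a.e. for $\alpha\le\beta$, converging a.e. to an integrable $f$, with $\int f_\alpha\,d\lambda$ not converging to $\int f\,d\lambda$. $\mathcal{NF}_{\kappa}$: $\kappa$-sequences of Lebesgue measurable $f_\alpha\ge0$ a.e. with $\liminf_\alpha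 f_\alpha$ integrable and $\int\liminf_\alpha f_\alpha\,d\lambda>\liminf_\alpha\int f_\alpha\,d\lambda$. $\mathcal{ND}_{\kappa}$: $\kappa$-sequences of Lebesgue measurable $f_\alpha:[0,1]\to\mathbb R$ dominated a.e. by a common integrable $g$, converging a.e. to an integrable $f$, with $\int|f_\alpha-f|\,d\lambda\not\to0$. $S$ is positively $\mu$-coneable if there is a linearly independent $B\subset S$ of cardinality $\mu$ all of whose finite combinations with positive coefficients lie in $S$. *)

theory Defs
  imports "HOL-Analysis.Analysis" "HOL-Library.Equipollence"
begin

abbreviation lam :: "real measure" where
  "lam \<equiv> lebesgue_on {0..1}"

definition nullN :: "real set set" where
  "nullN = {N. N \<subseteq> {0..1} \<and> N \<in> null_sets lebesgue}"

text \<open>The cardinality of I equals add(N) (the least cardinality of a family of null sets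
  with non-null union).\<close>
definition is_addN :: "'i set \<Rightarrow> bool" where
  "is_addN I \<longleftrightarrow>
     (\<exists>F. F \<subseteq> nullN \<and> F \<approx> I \<and> \<Union>F \<notin> nullN) \<and>
     (\<forall>F. F \<subseteq> nullN \<and> F \<prec> I \<longrightarrow> \<Union>F \<in> nullN)"

text \<open>The cardinality of I equals cov(N) (the least cardinality of a family of null sets
  covering [0,1]).\<close>
definition is_covN :: "'i set \<Rightarrow> bool" where
  "is_covN I \<longleftrightarrow>
     (\<exists>F. F \<subseteq> nullN \<and> F \<approx> I \<and> \<Union>F = {0..1}) \<and>
     (\<forall>F. F \<subseteq> nullN \<and> F \<prec> I \<longrightarrow> \<Union>F \<noteq> {0..1})"

text \<open>Convergence of a transfinite sequence indexed by the well-order r on I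
  (the ordinals below kappa when r is a cardinal order).\<close>
definition kconv :: "'i set \<Rightarrow> 'i rel \<Rightarrow> ('i \<Rightarrow> 'b::topological_space) \<Rightarrow> 'b \<Rightarrow> bool" where
  "kconv I r x l \<longleftrightarrow>
     (\<forall>U. open U \<and> l \<in> U \<longrightarrow>
        (\<exists>a0\<in>I. \<forall>a\<in>I. (a0, a) \<in> r \<and> a \<noteq> a0 \<longrightarrow> x a \<in> U))"

definition kcluster :: "'i set \<Rightarrow> 'i rel \<Rightarrow> ('i \<Rightarrow> 'b::topological_space) \<Rightarrow> 'b \<Rightarrow> bool" where
  "kcluster I r x y \<longleftrightarrow>
     (\<forall>U. open U \<and> y \<in> U \<longrightarrow>
        (\<forall>a0\<in>I. \<exists>a\<in>I. (a0, a) \<in> r \<and> a \<noteq> a0 \<and> x a \<in> U))"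

definition kliminf :: "'i set \<Rightarrow> 'i rel \<Rightarrow> ('i \<Rightarrow> ereal) \<Rightarrow> ereal" where
  "kliminf I r x = Inf {y. kcluster I r x y}"

text \<open>The ambient vector space (R^[0,1])^kappa, realised as functions vanishing outside
  I \<times> [0,1], with pointwise (indexwise) operations.\<close>
definition seq_space :: "'i set \<Rightarrow> ('i \<Rightarrow> real \<Rightarrow> real) set" where
  "seq_space I = {F. \<forall>a x. (a \<notin> I \<or> x \<notin> {0..1}) \<longrightarrow> F a x = 0}"

definition lincomb :: "(('i \<Rightarrow> real \<Rightarrow> real) \<Rightarrow> real) \<Rightarrow> ('i \<Rightarrow> real \<Rightarrow> real) set
    \<Rightarrow> 'i \<Rightarrow> real \<Rightarrow> real" where
  "lincomb c T = (\<lambda>a x. \<Sum>b\<in>T. c b * b a x)"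

definition lin_indep :: "('i \<Rightarrow> real \<Rightarrow> real) set \<Rightarrow> bool" where
  "lin_indep B \<longleftrightarrow>
     (\<forall>T c. finite T \<and> T \<subseteq> B \<and> lincomb c T = (\<lambda>a x. 0) \<longrightarrow> (\<forall>b\<in>T. c b = 0))"

text \<open>S is positively mu-coneable (mu given as the cardinality of the set M).\<close>
definition pos_coneable :: "('i \<Rightarrow> real \<Rightarrow> real) set \<Rightarrow> 'm set \<Rightarrow> bool" where
  "pos_coneable S M \<longleftrightarrow>
     (\<exists>B. B \<subseteq> S \<and> B \<approx> M \<and> lin_indep B \<and>
        (\<forall>T c. finite T \<and> T \<noteq> {} \<and> T \<subseteq> B \<and> (\<forall>b\<in>T. c b > 0) \<longrightarrow> lincomb c T \<in> S))"

definition NM :: "'i set \<Rightarrow> 'i rel \<Rightarrow> ('i \<Rightarrow> real \<Rightarrow> real) set" where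
  "NM I r = {F \<in> seq_space I.
     (\<forall>a\<in>I. F a \<in> borel_measurable lam) \<and>
     (\<forall>a\<in>I. \<forall>b\<in>I. (a, b) \<in> r \<longrightarrow> (AE x in lam. 0 \<le> F a x \<and> F a x \<le> F b x)) \<and>
     (\<exists>f. integrable lam f \<and> (AE x in lam. kconv I r (\<lambda>a. F a x) (f x)) \<and>
        \<not> kconv I r (\<lambda>a. enn2ereal (\<integral>\<^sup>+ x. ennreal (F a x) \<partial>lam)) (ereal (integral\<^sup>L lam f)))}"

definition NF :: "'i set \<Rightarrow> 'i rel \<Rightarrow> ('i \<Rightarrow> real \<Rightarrow> real) set" where
  "NF I r = {F \<in> seq_space I.
     (\<forall>a\<in>I. F a \<in> borel_measurable lam) \<and>
     (\<forall>a\<in>I. AE x in lam. 0 \<le> F a x) \<and>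
     (let g = (\<lambda>x. kliminf I r (\<lambda>a. ereal (F a x))) in
        (AE x in lam. \<bar>g x\<bar> \<noteq> \<infinity>) \<and>
        integrable lam (\<lambda>x. real_of_ereal (g x)) \<and>
        ereal (integral\<^sup>L lam (\<lambda>x. real_of_ereal (g x)))
          > kliminf I r (\<lambda>a. enn2ereal (\<integral>\<^sup>+ x. ennreal (F a x) \<partial>lam)))}"

definition ND :: "'i set \<Rightarrow> 'i rel \<Rightarrow> ('i \<Rightarrow> real \<Rightarrow> real) set" where
  "ND I r = {F \<in> seq_space I.
     (\<forall>a\<in>I. F a \<in> borel_measurable lam) \<and>
     (\<exists>g. integrable lam g \<and> (\<forall>a\<in>I. AE x in lam. \<bar>F a x\<bar> \<le> g x)) \<and>
     (\<exists>f. integrable lam f \<and> (AE x in lam. kconv I r (\<lambda>a. F a x) (f x)) \<and>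
        \<not> kconv I r (\<lambda>a. integral\<^sup>L lam (\<lambda>x. \<bar>F a x - f x\<bar>)) 0)}"

end

theory Submission
  imports Defs "HOL-Algebra.Free_Abelian_Groups"
begin

(* Under add(N) = cov(N), enumerate a cover of [0,1] by add(N) null sets along the cardinal order
   and let A_a be the union of the sets with index below a. Each A_a is null, being a union of fewer
   than add(N) null sets, yet every point of [0,1] lies in A_a for all large a. So the indicators of
   the A_a vanish a.e. while converging a.e. to 1, which defeats monotone convergence, Fatou and
   dominated convergence at once. None of this is affected by changing the sequence on a fixed null
   set Z; taking for Z a Cantor-type set of size continuum, the values on Z can encode the 2^c
   functions "T is contained in S" (T finite, S an arbitrary set of reals), which are linearly
   independent, and a positive combination of such sequences is again of the same shape. *)

lemma Icc01_not_null: "{0..1::real} \<notin> null_sets lebesgue"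
  by (simp add: null_sets_def)

lemma AE_lam_off_null:
  assumes "N \<in> null_sets lebesgue" "\<And>x. x \<in> {0..1} - N \<Longrightarrow> P x"
  shows "AE x in lam. P x"
  using assms by (intro AE_I'[of "N \<inter> {0..1}"]) (auto simp: null_sets_restrict_space null_set_Int2)

lemma lam_ae_const:
  fixes f :: "real \<Rightarrow> real"
  assumes N: "N \<in> null_sets lebesgue" and f: "\<And>x. x \<in> {0..1} - N \<Longrightarrow> f x = c"
  shows "f \<in> borel_measurable lam" "integrable lam f" "integral\<^sup>L lam f = c"
proof -
  have N01: "N \<inter> {0..1} \<in> null_sets lam"
    using N by (simp add: null_sets_restrict_space null_set_Int2)
  have "f \<in> borel_measurable (lebesgue_on ({0..1} - N \<inter> {0..1}))"
    using f by (subst measurable_cong[where g = "\<lambda>_. c"]) auto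
  then show meas: "f \<in> borel_measurable lam"
    by (simp add: borel_measurable_diff_null[OF N01])
  have ae: "AE x in lam. f x = c"
    using AE_lam_off_null[OF N f] .
  interpret finite_measure lam
    by (rule finite_measure_lebesgue_on) auto
  show "integrable lam f"
    using integrable_cong_AE[OF meas _ ae] by simp
  have "integral\<^sup>L lam f = integral\<^sup>L lam (\<lambda>_. c)"
    by (rule integral_cong_AE[OF meas _ ae]) simp
  also have "\<dots> = c"
    by (simp add: measure_restrict_space)
  finally show "integral\<^sup>L lam f = c" .
qed

definition cantor4 :: "nat set \<Rightarrow> real" where
  "cantor4 S = suminf (\<lambda>n. if n \<in> S then (1/4) ^ Suc n else 0)"

lemma cantor4_split:
  "\<exists>R. cantor4 S = (\<Sum>n\<in>S \<inter> {..<m}. (1/4) ^ Suc n) + R \<and> 0 \<le> R \<and> R \<le> (1/4) ^ m / 3"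
proof -
  define d where "d n = (if n \<in> S then (1/4::real) ^ Suc n else 0)" for n
  have geom: "(\<lambda>n. (1/4::real) ^ Suc (n + m)) sums ((1/4) ^ m / 3)"
    using sums_mult[OF geometric_sums[of "1/4::real"], of "(1/4) ^ Suc m"]
    by (simp add: power_add mult.commute)
  have le: "0 \<le> d (n + m) \<and> d (n + m) \<le> (1/4) ^ Suc (n + m)" for n
    by (simp add: d_def)
  have tail: "summable (\<lambda>n. d (n + m))"
    by (rule summable_comparison_test'[OF sums_summable[OF geom], of 0]) (use le in auto)
  have "cantor4 S = suminf (\<lambda>n. d (n + m)) + (\<Sum>n<m. d n)"
    unfolding cantor4_def d_def[symmetric]
    by (rule suminf_split_initial_segment) (use tail summable_iff_shift in blast)
  moreover have "(\<Sum>n<m. d n) = (\<Sum>n\<in>S \<inter> {..<m}. (1/4) ^ Suc n)"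
    by (simp add: d_def sum.If_cases Int_commute)
  moreover have "suminf (\<lambda>n. d (n + m)) \<le> (1/4) ^ m / 3"
    using suminf_le[OF _ tail sums_summable[OF geom]] le sums_unique[OF geom] by auto
  moreover have "0 \<le> suminf (\<lambda>n. d (n + m))"
    using suminf_nonneg[OF tail] le by auto
  ultimately show ?thesis by auto
qed

lemma cantor4_range: "cantor4 S \<in> {0..1}"
  using cantor4_split[of S 0] by auto

lemma cantor4_less:
  assumes "S \<inter> {..<m} = T \<inter> {..<m}" "m \<in> S" "m \<notin> T"
  shows "cantor4 T < cantor4 S"
proof -
  define p where "p = (\<Sum>n\<in>S \<inter> {..<m}. (1/4::real) ^ Suc n)"
  have S_prefix: "S \<inter> {..<Suc m} = insert m (S \<inter> {..<m})" and
       T_prefix: "T \<inter> {..<Suc m} = T \<inter> {..<m}"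
    using assms(2,3) by (auto simp: less_Suc_eq)
  obtain R where R: "cantor4 T = p + R" "R \<le> (1/4) ^ Suc m / 3"
    using cantor4_split[of T "Suc m"] unfolding T_prefix assms(1)[symmetric] p_def by blast
  obtain R' where R': "cantor4 S = p + (1/4) ^ Suc m + R'" "0 \<le> R'"
    using cantor4_split[of S "Suc m"] unfolding S_prefix p_def by auto
  have "(0::real) < (1/4) ^ Suc m"
    by simp
  then show ?thesis
    using R R' by linarith
qed

lemma inj_cantor4: "inj cantor4"
proof (rule injI, rule ccontr)
  fix S T assume eq: "cantor4 S = cantor4 T" and "S \<noteq> T"
  then obtain k where "(k \<in> S) \<noteq> (k \<in> T)" by blast
  define m where "m = (LEAST n. (n \<in> S) \<noteq> (n \<in> T))"
  have m: "(m \<in> S) \<noteq> (m \<in> T)"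
    unfolding m_def by (rule LeastI) fact
  have prefix: "S \<inter> {..<m} = T \<inter> {..<m}"
    using not_less_Least[of _ "\<lambda>n. (n \<in> S) \<noteq> (n \<in> T)"] unfolding m_def by blast
  show False
    using m cantor4_less[OF prefix] cantor4_less[OF prefix[symmetric]] eq by (cases "m \<in> S") auto
qed

lemma null_range_cantor4: "range cantor4 \<in> null_sets lebesgue"
proof -
  define p where "p P = (\<Sum>n\<in>P. (1/4::real) ^ Suc n)" for P
  define U where "U m = (\<Union>P\<in>Pow {..<m}. {p P .. p P + (1/4) ^ m})" for m :: nat
  have cover: "range cantor4 \<subseteq> U m" for m
  proof
    fix x assume "x \<in> range cantor4"
    then obtain S where x: "x = cantor4 S" by auto
    obtain R where "cantor4 S = p (S \<inter> {..<m}) + R" "0 \<le> R" "R \<le> (1/4) ^ m / 3"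
      using cantor4_split[of S m] unfolding p_def by blast
    then show "x \<in> U m"
      unfolding U_def x by (intro UN_I[of "S \<inter> {..<m}"]) auto
  qed
  have U_meas: "U m \<in> lmeasurable" for m
    unfolding U_def by (intro fmeasurable.finite_UN) auto
  have U_small: "measure lebesgue (U m) \<le> (1/2) ^ m" for m
  proof -
    have "measure lebesgue (U m) \<le> (\<Sum>P\<in>Pow {..<m}. measure lebesgue {p P .. p P + (1/4) ^ m})"
      unfolding U_def by (rule measure_UNION_le) auto
    also have "\<dots> = 2 ^ m * (1/4) ^ m"
      by (simp add: card_Pow)
    also have "\<dots> = (1/2::real) ^ m"
      by (simp add: power_mult_distrib[symmetric])
    finally show ?thesis .
  qed
  have "negligible (range cantor4)"
    unfolding negligible_outer_le
  proof (intro allI impI)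
    fix e :: real assume "e > 0"
    then obtain m where "(1/2::real) ^ m < e"
      using real_arch_pow_inv[of e "1/2"] by auto
    then show "\<exists>T. range cantor4 \<subseteq> T \<and> T \<in> lmeasurable \<and> measure lebesgue T \<le> e"
      using cover U_meas U_small[of m] by (intro exI[of _ "U m"]) auto
  qed
  then show ?thesis
    by (simp add: negligible_iff_null_sets)
qed

lemma Fpow_reals_lepoll_nat_sets: "Fpow (UNIV :: real set) \<lesssim> (UNIV :: nat set set)"
  using eqpoll_Fpow[of "UNIV :: real set"] nat_sets_eqpoll_reals
  by (meson eqpoll_imp_lepoll eqpoll_sym eqpoll_trans infinite_UNIV_char_0)

lemma finite_subset_indicators_independent:
  fixes d :: "'a set \<Rightarrow> 'b::comm_monoid_add"
  assumes "finite SS"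
    and "\<And>T. finite T \<Longrightarrow> (\<Sum>S\<in>SS. if T \<subseteq> S then d S else 0) = 0"
  shows "\<forall>S\<in>SS. d S = 0"
  using assms
proof (induction SS rule: finite_remove_induct)
  case empty
  then show ?case by simp
next
  case (remove SS)
  obtain S0 where S0: "S0 \<in> SS" "\<forall>S\<in>SS. S0 \<subseteq> S \<longrightarrow> S0 = S"
    using finite_has_maximal[OF remove.hyps(1,2)] by blast
  then obtain t where t: "\<forall>S\<in>SS - {S0}. t S \<in> S0 \<and> t S \<notin> S"
    by (metis Diff_iff insertI1 subsetI)
  \<comment> \<open>the finite set t ` (SS - {S0}) is contained in S0 and in no other member of SS\<close>
  have "(\<Sum>S\<in>SS. if t ` (SS - {S0}) \<subseteq> S then d S else 0) = (\<Sum>S\<in>SS. if S = S0 then d S else 0)"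
    using t by (intro sum.cong) auto
  then have d0: "d S0 = 0"
    using remove.prems[of "t ` (SS - {S0})"] remove.hyps(1) S0(1) by simp
  have "(\<Sum>S\<in>SS - {S0}. if T \<subseteq> S then d S else 0) = 0" if "finite T" for T
    using remove.prems[OF that] sum.remove[OF remove.hyps(1) S0(1), of "\<lambda>S. if T \<subseteq> S then d S else 0"]
    by (simp add: d0 cong: if_cong)
  then show ?case
    using remove.IH[OF S0(1)] d0 by blast
qed

lemma pos_coneable_image:
  fixes \<Phi> :: "'a \<Rightarrow> 'i \<Rightarrow> real \<Rightarrow> real"
  assumes inj: "inj_on \<Phi> M"
    and indep: "\<And>SS d. finite SS \<Longrightarrow> SS \<subseteq> M \<Longrightarrow> (\<lambda>a x. \<Sum>S\<in>SS. d S * \<Phi> S a x) = (\<lambda>a x. 0)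
      \<Longrightarrow> \<forall>S\<in>SS. d S = 0"
    and cone: "\<And>SS d. finite SS \<Longrightarrow> SS \<noteq> {} \<Longrightarrow> SS \<subseteq> M \<Longrightarrow> \<forall>S\<in>SS. d S > 0
      \<Longrightarrow> (\<lambda>a x. \<Sum>S\<in>SS. d S * \<Phi> S a x) \<in> X"
  shows "pos_coneable X M"
proof -
  have lincomb_image: "lincomb c (\<Phi> ` SS) = (\<lambda>a x. \<Sum>S\<in>SS. c (\<Phi> S) * \<Phi> S a x)"
    if "SS \<subseteq> M" for c SS
    unfolding lincomb_def by (simp add: sum.reindex[OF inj_on_subset[OF inj that]])
  have preimage: "\<exists>SS\<subseteq>M. finite SS \<and> T = \<Phi> ` SS" if "finite T" "T \<subseteq> \<Phi> ` M" for T
    using finite_subset_image[OF that] .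
  have "\<Phi> S \<in> X" if "S \<in> M" for S
    using cone[of "{S}" "\<lambda>_. 1"] that by simp
  moreover have "M \<approx> \<Phi> ` M"
    unfolding eqpoll_def using inj_on_imp_bij_betw[OF inj] by blast
  moreover have "lin_indep (\<Phi> ` M)"
    unfolding lin_indep_def
  proof (intro allI impI)
    fix T c assume "finite T \<and> T \<subseteq> \<Phi> ` M \<and> lincomb c T = (\<lambda>a x. 0)"
    then obtain SS where SS: "SS \<subseteq> M" "finite SS" "T = \<Phi> ` SS" and "lincomb c T = (\<lambda>a x. 0)"
      using preimage by blast
    then have "\<forall>S\<in>SS. c (\<Phi> S) = 0"
      using indep[OF SS(2,1), of "c \<circ> \<Phi>"] lincomb_image[OF SS(1)] by simp
    then show "\<forall>b\<in>T. c b = 0"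
      using SS(3) by blast
  qed
  moreover have "lincomb c T \<in> X"
    if T: "finite T" "T \<noteq> {}" "T \<subseteq> \<Phi> ` M" and c: "\<forall>b\<in>T. c b > 0" for T c
  proof -
    obtain SS where SS: "SS \<subseteq> M" "finite SS" "T = \<Phi> ` SS"
      using preimage T(1,3) by blast
    then show ?thesis
      using cone[OF SS(2) _ SS(1), of "c \<circ> \<Phi>"] lincomb_image[OF SS(1)] T(2) c by auto
  qed
  ultimately show ?thesis
    unfolding pos_coneable_def by (intro exI[of _ "\<Phi> ` M"]) (auto intro: eqpoll_sym)
qed

lemma kconv_eventually_const:
  assumes "b \<in> I" "\<forall>a\<in>I. (b, a) \<in> r \<and> a \<noteq> b \<longrightarrow> x a = l"
  shows "kconv I r x l"
  using assms unfolding kconv_def by blast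

locale null_exhaustion =
  fixes I :: "'i set" and r :: "'i rel" and A :: "'i \<Rightarrow> real set"
  assumes well_order: "well_order_on I r"
    and null_A: "\<And>a. a \<in> I \<Longrightarrow> A a \<in> null_sets lebesgue"
    and eventually_in_A: "\<And>x. x \<in> {0..1} \<Longrightarrow> \<exists>b\<in>I. \<forall>a\<in>I. (b, a) \<in> r \<and> a \<noteq> b \<longrightarrow> x \<in> A a"
    and no_maximum: "\<And>a0. a0 \<in> I \<Longrightarrow> \<exists>a\<in>I. (a0, a) \<in> r \<and> a \<noteq> a0"
begin

lemma index_nonempty: "I \<noteq> {}"
  using eventually_in_A[of 0] by auto

lemma common_strict_upper_bound:
  assumes a0: "a0 \<in> I" and b: "b \<in> I"
  shows "\<exists>a\<in>I. (a0, a) \<in> r \<and> a \<noteq> a0 \<and> (b, a) \<in> r \<and> a \<noteq> b"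
proof -
  have "linear_order_on I r"
    using well_order by (simp add: well_order_on_def)
  then have refl: "refl_on I r" and "trans r" "antisym r" "total_on I r"
    by (auto simp: linear_order_on_def partial_order_on_def preorder_on_def)
  obtain m where m: "m \<in> I" "(a0, m) \<in> r" "(b, m) \<in> r"
    using \<open>total_on I r\<close> refl_onD[OF refl] a0 b unfolding total_on_def by metis
  obtain a where a: "a \<in> I" "(m, a) \<in> r" "a \<noteq> m"
    using no_maximum[OF m(1)] by blast
  have "(a0, a) \<in> r" "(b, a) \<in> r"
    using m a \<open>trans r\<close> by (meson transD)+
  moreover have "a \<noteq> a0" "a \<noteq> b"
    using m a \<open>antisym r\<close> by (metis antisymD)+
  ultimately show ?thesis
    using a(1) by blast
qed

lemma not_kconv_const:
  fixes x :: "'i \<Rightarrow> 'b::t1_space"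
  assumes "\<forall>a\<in>I. x a = c" "c \<noteq> l"
  shows "\<not> kconv I r x l"
proof
  assume "kconv I r x l"
  moreover have "open (- {c}) \<and> l \<in> - {c}"
    using assms(2) by auto
  ultimately obtain a0 where a0: "a0 \<in> I" "\<forall>a\<in>I. (a0, a) \<in> r \<and> a \<noteq> a0 \<longrightarrow> x a \<in> - {c}"
    unfolding kconv_def by blast
  then obtain a where "a \<in> I" "(a0, a) \<in> r" "a \<noteq> a0"
    using no_maximum by blast
  then show False
    using a0(2) assms(1) by auto
qed

lemma kliminf_eventually_const:
  assumes b: "b \<in> I" and ev: "\<forall>a\<in>I. (b, a) \<in> r \<and> a \<noteq> b \<longrightarrow> x a = c"
  shows "kliminf I r x = c"
proof -
  have "kcluster I r x y \<longleftrightarrow> y = c" for y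
  proof
    assume cluster: "kcluster I r x y"
    show "y = c"
    proof (rule ccontr)
      assume "y \<noteq> c"
      then have "open (- {c}) \<and> y \<in> - {c}"
        by auto
      then obtain a where "a \<in> I" "(b, a) \<in> r" "a \<noteq> b" "x a \<in> - {c}"
        using cluster b unfolding kcluster_def by blast
      then show False
        using ev by auto
    qed
  next
    assume "y = c"
    then show "kcluster I r x y"
      unfolding kcluster_def using ev common_strict_upper_bound[OF _ b] by fastforce
  qed
  then have "{y. kcluster I r x y} = {c}"
    by blast
  then show ?thesis
    unfolding kliminf_def by simp
qed

lemma kliminf_const:
  assumes "\<forall>a\<in>I. x a = c"
  shows "kliminf I r x = c"
  using kliminf_eventually_const assms index_nonempty by blast

definition vanishing_seq :: "real set \<Rightarrow> real \<Rightarrow> (real \<Rightarrow> real) \<Rightarrow> 'i \<Rightarrow> real \<Rightarrow> real" where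
  "vanishing_seq Z C H a x =
     (if a \<in> I \<and> x \<in> {0..1} then if x \<in> Z then H x else C * indicator (A a) x else 0)"

lemma vanishing_seq_sum:
  "(\<lambda>a x. \<Sum>S\<in>SS. d S * vanishing_seq Z (C S) (H S) a x)
     = vanishing_seq Z (\<Sum>S\<in>SS. d S * C S) (\<lambda>x. \<Sum>S\<in>SS. d S * H S x)"
  by (intro ext) (auto simp: vanishing_seq_def sum_distrib_right mult.assoc)

lemma vanishing_seq_in_seq_space: "vanishing_seq Z C H \<in> seq_space I"
  by (simp add: seq_space_def vanishing_seq_def)

context
  fixes Z :: "real set"
  assumes null_Z: "Z \<in> null_sets lebesgue"
begin

lemma null_Z_A: "a \<in> I \<Longrightarrow> Z \<union> A a \<in> null_sets lebesgue"
  using null_Z null_A by blast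

lemma vanishing_seq_ae_zero: "a \<in> I \<Longrightarrow> x \<in> {0..1} - (Z \<union> A a) \<Longrightarrow> vanishing_seq Z C H a x = 0"
  by (simp add: vanishing_seq_def)

lemma AE_vanishing_seq_zero:
  assumes "a \<in> I"
  shows "AE x in lam. vanishing_seq Z C H a x = 0"
  by (rule AE_lam_off_null[OF null_Z_A[OF assms]]) (rule vanishing_seq_ae_zero[OF assms])

lemma vanishing_seq_measurable:
  assumes "a \<in> I"
  shows "vanishing_seq Z C H a \<in> borel_measurable lam"
  by (rule lam_ae_const(1)[OF null_Z_A[OF assms]]) (rule vanishing_seq_ae_zero[OF assms])

lemma nn_integral_vanishing_seq:
  assumes "a \<in> I"
  shows "(\<integral>\<^sup>+ x. ennreal (vanishing_seq Z C H a x) \<partial>lam) = 0"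
proof -
  have "AE x in lam. ennreal (vanishing_seq Z C H a x) = 0"
    using AE_vanishing_seq_zero[OF assms, of C H] by eventually_elim simp
  then show ?thesis
    by (simp add: nn_integral_cong_AE)
qed

lemma vanishing_seq_eventually:
  assumes "x \<in> {0..1} - Z"
  shows "\<exists>b\<in>I. \<forall>a\<in>I. (b, a) \<in> r \<and> a \<noteq> b \<longrightarrow> vanishing_seq Z C H a x = C"
proof -
  obtain b where "b \<in> I" "\<forall>a\<in>I. (b, a) \<in> r \<and> a \<noteq> b \<longrightarrow> x \<in> A a"
    using eventually_in_A assms by blast
  then show ?thesis
    using assms by (intro bexI[of _ b]) (auto simp: vanishing_seq_def)
qed

lemma AE_kconv_vanishing_seq: "AE x in lam. kconv I r (\<lambda>a. vanishing_seq Z C H a x) C"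
proof (rule AE_lam_off_null[OF null_Z])
  fix x assume "x \<in> {0..1} - Z"
  then obtain b where "b \<in> I" "\<forall>a\<in>I. (b, a) \<in> r \<and> a \<noteq> b \<longrightarrow> vanishing_seq Z C H a x = C"
    using vanishing_seq_eventually by blast
  then show "kconv I r (\<lambda>a. vanishing_seq Z C H a x) C"
    by (rule kconv_eventually_const)
qed

lemma vanishing_seq_NM:
  assumes "C > 0"
  shows "vanishing_seq Z C H \<in> NM I r"
proof -
  have "AE x in lam. 0 \<le> vanishing_seq Z C H a x \<and> vanishing_seq Z C H a x \<le> vanishing_seq Z C H b x"
    if "a \<in> I" "b \<in> I" for a b
    using AE_vanishing_seq_zero[OF that(1), of C H] AE_vanishing_seq_zero[OF that(2), of C H]
    by eventually_elim simp
  moreover have "integrable lam (\<lambda>_. C)" "integral\<^sup>L lam (\<lambda>_. C) = C"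
    using lam_ae_const(2,3)[of "{}" "\<lambda>_. C" C] by auto
  moreover have "\<not> kconv I r (\<lambda>a. enn2ereal (\<integral>\<^sup>+ x. ennreal (vanishing_seq Z C H a x) \<partial>lam)) (ereal C)"
    using assms by (intro not_kconv_const[of _ 0]) (simp_all add: nn_integral_vanishing_seq zero_ennreal.rep_eq)
  ultimately show ?thesis
    unfolding NM_def using vanishing_seq_in_seq_space vanishing_seq_measurable AE_kconv_vanishing_seq
    by (intro CollectI conjI exI[of _ "\<lambda>_. C"]) auto
qed

lemma vanishing_seq_ND:
  assumes "C > 0"
  shows "vanishing_seq Z C H \<in> ND I r"
proof -
  have "AE x in lam. \<bar>vanishing_seq Z C H a x\<bar> \<le> 0" if "a \<in> I" for a
    using AE_vanishing_seq_zero[OF that, of C H] by eventually_elim simp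
  moreover have "integrable lam (\<lambda>_. C)"
    using lam_ae_const(2)[of "{}" "\<lambda>_. C" C] by auto
  moreover have "integral\<^sup>L lam (\<lambda>x. \<bar>vanishing_seq Z C H a x - C\<bar>) = C" if "a \<in> I" for a
    using lam_ae_const(3)[OF null_Z_A[OF that], of "\<lambda>x. \<bar>vanishing_seq Z C H a x - C\<bar>" C]
      vanishing_seq_ae_zero[OF that] assms by simp
  then have "\<not> kconv I r (\<lambda>a. integral\<^sup>L lam (\<lambda>x. \<bar>vanishing_seq Z C H a x - C\<bar>)) 0"
    using assms by (intro not_kconv_const[of _ C]) auto
  ultimately show ?thesis
    unfolding ND_def using vanishing_seq_in_seq_space vanishing_seq_measurable AE_kconv_vanishing_seq
    by (intro CollectI conjI exI[of _ "\<lambda>_. C"] exI[of _ "\<lambda>_. 0"]) auto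
qed

lemma vanishing_seq_NF:
  assumes "C > 0"
  shows "vanishing_seq Z C H \<in> NF I r"
proof -
  define g where "g x = kliminf I r (\<lambda>a. ereal (vanishing_seq Z C H a x))" for x
  have "g x = ereal C" if x: "x \<in> {0..1} - Z" for x
  proof -
    obtain b where "b \<in> I" "\<forall>a\<in>I. (b, a) \<in> r \<and> a \<noteq> b \<longrightarrow> vanishing_seq Z C H a x = C"
      using vanishing_seq_eventually[OF x] by blast
    then show ?thesis
      unfolding g_def by (intro kliminf_eventually_const) auto
  qed
  then have g: "real_of_ereal (g x) = C" "\<bar>g x\<bar> \<noteq> \<infinity>" if "x \<in> {0..1} - Z" for x
    using that by auto
  have nonneg: "\<forall>a\<in>I. AE x in lam. 0 \<le> vanishing_seq Z C H a x"
  proof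
    fix a assume "a \<in> I"
    show "AE x in lam. 0 \<le> vanishing_seq Z C H a x"
      using AE_vanishing_seq_zero[OF \<open>a \<in> I\<close>, of C H] by eventually_elim simp
  qed
  have g_finite: "AE x in lam. \<bar>g x\<bar> \<noteq> \<infinity>"
    using AE_lam_off_null[OF null_Z] g(2) .
  have g_integrable: "integrable lam (\<lambda>x. real_of_ereal (g x))"
    using lam_ae_const(2)[OF null_Z g(1)] .
  have Fatou_fails: "kliminf I r (\<lambda>a. enn2ereal (\<integral>\<^sup>+ x. ennreal (vanishing_seq Z C H a x) \<partial>lam))
      < ereal (integral\<^sup>L lam (\<lambda>x. real_of_ereal (g x)))"
  proof -
    have "kliminf I r (\<lambda>a. enn2ereal (\<integral>\<^sup>+ x. ennreal (vanishing_seq Z C H a x) \<partial>lam)) = 0"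
      by (intro kliminf_const) (simp add: nn_integral_vanishing_seq zero_ennreal.rep_eq)
    then show ?thesis
      using lam_ae_const(3)[OF null_Z g(1)] assms by simp
  qed
  show ?thesis
    unfolding NF_def Let_def
    using vanishing_seq_in_seq_space vanishing_seq_measurable nonneg
      g_finite[unfolded g_def] g_integrable[unfolded g_def] Fatou_fails[unfolded g_def]
    by (intro CollectI conjI) blast+
qed

end

lemma vanishing_seq_subset_code:
  assumes j: "inj_on j (Fpow UNIV)" "j ` Fpow UNIV \<subseteq> Z" and "Z \<subseteq> {0..1}"
    and "a \<in> I" "finite T"
  shows "vanishing_seq Z 1 (indicator (j ` Fpow S)) a (j T) = of_bool (T \<subseteq> S)"
proof -
  have "j T \<in> j ` Fpow S \<longleftrightarrow> T \<in> Fpow S"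
    using j(1) assms(5) by (intro inj_on_image_mem_iff) (auto simp: Fpow_def)
  then show ?thesis
    using assms unfolding vanishing_seq_def by (auto simp: Fpow_def)
qed

lemma pos_coneable_if_vanishing_seqs:
  assumes "\<And>C H. C > 0 \<Longrightarrow> vanishing_seq (range cantor4) C H \<in> X"
  shows "pos_coneable X (Pow (UNIV :: real set))"
proof -
  obtain e :: "real set \<Rightarrow> nat set" where e: "inj_on e (Fpow UNIV)"
    using Fpow_reals_lepoll_nat_sets unfolding lepoll_def by blast
  define j where "j = cantor4 \<circ> e"
  have j: "inj_on j (Fpow UNIV)" "j ` Fpow UNIV \<subseteq> range cantor4"
    unfolding j_def using e inj_cantor4 by (auto intro: comp_inj_on inj_on_subset)
  define \<Phi> where "\<Phi> S = vanishing_seq (range cantor4) 1 (indicator (j ` Fpow S))" for S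
  obtain a0 where a0: "a0 \<in> I"
    using index_nonempty by blast
  have \<Phi>_code: "\<Phi> S a0 (j T) = of_bool (T \<subseteq> S)" if "finite T" for S T
    unfolding \<Phi>_def using vanishing_seq_subset_code[OF j _ a0 that] cantor4_range by blast
  have sum_\<Phi>: "(\<lambda>a x. \<Sum>S\<in>SS. d S * \<Phi> S a x)
      = vanishing_seq (range cantor4) (sum d SS) (\<lambda>x. \<Sum>S\<in>SS. d S * indicator (j ` Fpow S) x)" for SS d
    unfolding \<Phi>_def using vanishing_seq_sum[of d _ "\<lambda>_. 1"] by simp
  show ?thesis
  proof (rule pos_coneable_image)
    show "inj_on \<Phi> (Pow UNIV)"
    proof (rule inj_onI)
      fix S S' assume eq: "\<Phi> S = \<Phi> S'"
      have "t \<in> S \<longleftrightarrow> t \<in> S'" for t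
        using \<Phi>_code[of "{t}" S] \<Phi>_code[of "{t}" S'] eq by (simp add: of_bool_eq_iff)
      then show "S = S'"
        by blast
    qed
  next
    fix SS d assume SS: "finite SS" "SS \<subseteq> Pow UNIV"
      and zero: "(\<lambda>a x. \<Sum>S\<in>SS. d S * \<Phi> S a x) = (\<lambda>a x. 0)"
    have "(\<Sum>S\<in>SS. if T \<subseteq> S then d S else 0) = 0" if "finite T" for T
    proof -
      have "(\<Sum>S\<in>SS. if T \<subseteq> S then d S else 0) = (\<Sum>S\<in>SS. d S * \<Phi> S a0 (j T))"
        by (intro sum.cong) (simp_all add: \<Phi>_code[OF that])
      also have "\<dots> = 0"
        using fun_cong[OF fun_cong[OF zero, of a0], of "j T"] by simp
      finally show ?thesis .
    qed
    then show "\<forall>S\<in>SS. d S = 0"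
      using finite_subset_indicators_independent[OF SS(1)] by blast
  next
    fix SS and d :: "real set \<Rightarrow> real" assume "finite SS" "SS \<noteq> {}" "\<forall>S\<in>SS. d S > 0"
    then show "(\<lambda>a x. \<Sum>S\<in>SS. d S * \<Phi> S a x) \<in> X"
      unfolding sum_\<Phi> by (intro assms sum_pos) auto
  qed
qed

end

lemma card_order_underS_lesspoll:
  assumes "card_order_on I r" "a \<in> I"
  shows "underS r a \<prec> I"
proof -
  have co: "I = Field r" "Card_order r"
    using card_order_on_Card_order[OF assms(1)] by auto
  have lt: "|underS r a| <o |I|"
    using card_of_underS[OF co(2)] card_of_Field_ordIso[OF co(2)] assms(2) co(1)
    by (metis ordLess_ordIso_trans ordIso_symmetric)
  have "underS r a \<lesssim> I"
    unfolding lepoll_def using card_of_ordLeq ordLess_imp_ordLeq[OF lt] by blast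
  moreover have "\<not> underS r a \<approx> I"
    unfolding eqpoll_iff_card_of_ordIso using not_ordLess_ordIso[OF lt] by blast
  ultimately show ?thesis
    unfolding lesspoll_def by blast
qed

lemma null_exhaustion_initial_unions:
  assumes wo: "well_order_on I r"
    and null_g: "\<And>a. a \<in> I \<Longrightarrow> g a \<in> null_sets lebesgue"
    and cover: "\<Union> (g ` I) = {0..1}"
    and null_initial: "\<And>a. a \<in> I \<Longrightarrow> \<Union> (g ` underS r a) \<in> null_sets lebesgue"
  shows "null_exhaustion I r (\<lambda>a. \<Union> (g ` underS r a))"
proof
  show "well_order_on I r" "\<And>a. a \<in> I \<Longrightarrow> \<Union> (g ` underS r a) \<in> null_sets lebesgue"
    using wo null_initial .
next
  fix x :: real assume "x \<in> {0..1}"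
  then obtain b where "b \<in> I" "x \<in> g b"
    using cover by blast
  then show "\<exists>b\<in>I. \<forall>a\<in>I. (b, a) \<in> r \<and> a \<noteq> b \<longrightarrow> x \<in> \<Union> (g ` underS r a)"
    by (intro bexI[of _ b]) (auto simp: underS_def intro!: exI[of _ b])
next
  fix a0 assume a0: "a0 \<in> I"
  show "\<exists>a\<in>I. (a0, a) \<in> r \<and> a \<noteq> a0"
  proof (rule ccontr)
    assume no_greater: "\<not> (\<exists>a\<in>I. (a0, a) \<in> r \<and> a \<noteq> a0)"
    have "total_on I r"
      using wo by (simp add: well_order_on_def linear_order_on_def)
    then have "I \<subseteq> insert a0 (underS r a0)"
      using a0 no_greater unfolding total_on_def underS_def by auto
    then have "\<Union> (g ` I) \<subseteq> \<Union> (g ` underS r a0) \<union> g a0"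
      by auto
    then have "{0..1} \<subseteq> \<Union> (g ` underS r a0) \<union> g a0"
      unfolding cover .
    moreover have "\<Union> (g ` underS r a0) \<union> g a0 \<in> null_sets lebesgue"
      using null_initial[OF a0] null_g[OF a0] by blast
    ultimately show False
      using Icc01_not_null null_sets_subset[of "\<Union> (g ` underS r a0) \<union> g a0" lebesgue "{0..1}"] by simp
  qed
qed

lemma add_eq_cov_null_exhaustion:
  assumes card: "card_order_on I r" and add: "is_addN I" and cov: "is_covN I"
  shows "\<exists>A. null_exhaustion I r A"
proof -
  obtain F where F: "F \<subseteq> nullN" "F \<approx> I" "\<Union>F = {0..1}"
    using cov unfolding is_covN_def by blast
  then obtain g where "bij_betw g I F"
    using eqpoll_sym unfolding eqpoll_def by blast
  then have g_I: "g ` I = F"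
    by (simp add: bij_betw_def)
  have "well_order_on I r"
    using card unfolding card_order_on_def by blast
  moreover have "g a \<in> null_sets lebesgue" if "a \<in> I" for a
    using that g_I F(1) unfolding nullN_def by blast
  moreover have "\<Union> (g ` underS r a) \<in> null_sets lebesgue" if "a \<in> I" for a
  proof -
    have "g ` underS r a \<lesssim> underS r a"
      by (rule image_lepoll)
    also have "underS r a \<prec> I"
      using card_order_underS_lesspoll[OF card that] .
    finally have "g ` underS r a \<prec> I" .
    moreover have "underS r a \<subseteq> I"
      using Order_Relation.underS_Field[of r a] card_order_on_Card_order[OF card] by simp
    then have "g ` underS r a \<subseteq> nullN"
      using g_I F(1) by blast
    ultimately have "\<Union> (g ` underS r a) \<in> nullN"
      using add unfolding is_addN_def by blast
    then show ?thesis
      unfolding nullN_def by blast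
  qed
  ultimately show ?thesis
    using null_exhaustion_initial_unions F(3) g_I by blast
qed

theorem mainTheorem8:
  fixes I :: "'i set" and r :: "'i rel"
  assumes "card_order_on I r"
    and "is_addN I"
    and "is_covN I"
  shows "pos_coneable (NM I r) (Pow (UNIV :: real set))
       \<and> pos_coneable (NF I r) (Pow (UNIV :: real set))
       \<and> pos_coneable (ND I r) (Pow (UNIV :: real set))"
proof -
  obtain A where "null_exhaustion I r A"
    using add_eq_cov_null_exhaustion assms by blast
  then interpret null_exhaustion I r A .
  show ?thesis
    using pos_coneable_if_vanishing_seqs vanishing_seq_NM[OF null_range_cantor4]
      vanishing_seq_NF[OF null_range_cantor4] vanishing_seq_ND[OF null_range_cantor4]
    by blast
qed

end
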